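(* Let $\mathcal{B}_4$, $\pi_{\lambda,\mu}$ ($\lambda\neq0,\mu\in\mathbb{R}$), the group Fourier transform $\pi_{\lambda,\mu}(\kappa)=\hat\kappa(\pi_{\lambda,\mu})$ and the difference operators $\Delta_{x_i}$ be as in the context. Then for suitable distributions $\kappa$ on $\mathcal{B}_4$ (e.g. $\kappa\in\mathcal{S}(\mathbb{R}^4)$), $$\Delta_{x_1}\hat\kappa(\pi_{\lambda,\mu})=\frac{i}{\lambda}\Big(\pi_{\lambda,\mu}(X_3)\pi_{\lambda,\mu}(\kappa)-\pi_{\lambda,\mu}(\kappa)\pi_{\lambda,\mu}(X_3)\Big),$$ where $\pi_{\lambda,\mu}(X_3)$ is the operator of multiplication by $-i\lambda u$, and $$\Delta_{x_2}\hat\kappa(\pi_{\lambda,\mu})=\frac{2\lambda}{i}\,\partial_\mu\,\pi_{\lambda,\mu}(\kappa).$$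
   Context: The Engel group $\mathcal{B}_4$ is $\mathbb{R}^4$ with the law $(x_1,x_2,x_3,x_4)\circ(y_1,y_2,y_3,y_4)=(x_1+y_1,x_2+y_2,x_3+y_3-x_1y_2,x_4+y_4+\frac12x_1^2y_2-x_1y_3)$ and Haar measure the Lebesgue measure. Its left-invariant vector fields are $X_1=\partial_{x_1}$, $X_2=\partial_{x_2}-x_1\partial_{x_3}+\frac{x_1^2}{2}\partial_{x_4}$, $X_3=\partial_{x_3}-x_1\partial_{x_4}$, $X_4=\partial_{x_4}$. For $\lambda\neq0$, $\mu\in\mathbb{R}$, $\pi_{\lambda,\mu}(x)h(u)=\exp\big(i(-\frac{\mu}{2\lambda}x_2+\lambda x_4-\lambda x_3u+\frac{\lambda}{2}x_2u^2)\big)h(u+x_1)$ on $L^2(\mathbb{R})$. The group Fourier transform is $\hat\kappa(\pi_{\lambda,\mu})=\pi_{\lambda,\mu}(\kappa)=\int_{\mathcal{B}_4}\kappa(x)\pi_{\lambda,\mu}(x)^*dx$; explicitly $\pi_{\lambda,\mu}(\kappa)h(u)=\int_{\mathbb{R}^4}\kappa(x)\exp\big(i(\frac{\mu}{2\lambda}x_2-\lambda x_4+\lambda x_3(u-x_1)-\frac{\lambda}{2}x_2(u-x_1)^2)\big)h(u-x_1)\,dx$. The same symbol $\pi_{\lambda,\mu}$ denotes the infinitesimal representation: $\pi_{\lambda,\mu}(X_1)=\partial_u$, $\pi_{\lambda,\mu}(X_2)=\frac{i}{2}(\lambda u^2-\frac{\mu}{\lambda})$, $\pi_{\lambda,\mu}(X_3)=-i\lambda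 u$, $\pi_{\lambda,\mu}(X_4)=i\lambda$ (multiplication operators except the first). The difference operators are defined by $\Delta_{x_i}\hat\kappa(\pi_{\lambda,\mu}):=\pi_{\lambda,\mu}(x_i\kappa)$, $i=1,\dots,4$, where $x_i\kappa$ is $\kappa$ multiplied by the coordinate function $x_i$. $\partial_\mu\pi_{\lambda,\mu}(\kappa)$ denotes the derivative in the parameter $\mu$ of the operator family (applied pointwise to $\pi_{\lambda,\mu}(\kappa)h(u)$). *)

theory Defs
  imports "HOL-Analysis.Analysis"
begin

definition partial_deriv :: "'n::finite \<Rightarrow> (real^'n \<Rightarrow> complex) \<Rightarrow> real^'n \<Rightarrow> complex" where
  "partial_deriv i f x = vector_derivative (\<lambda>t. f (x + t *\<^sub>R axis i 1)) (at 0)"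

fun iter_partial :: "'n::finite list \<Rightarrow> (real^'n \<Rightarrow> complex) \<Rightarrow> real^'n \<Rightarrow> complex" where
  "iter_partial [] f = f"
| "iter_partial (i # is) f = partial_deriv i (iter_partial is f)"

definition schwartz :: "(real^'n::finite \<Rightarrow> complex) \<Rightarrow> bool" where
  "schwartz f \<longleftrightarrow>
     (\<forall>is x. iter_partial is f differentiable (at x)) \<and>
     (\<forall>is (n::nat). \<exists>C. \<forall>x. (1 + norm x) ^ n * norm (iter_partial is f x) \<le> C)"

text \<open>Group Fourier transform pi_{lam,mu}(kappa) of the Engel group B_4 applied to h, evaluated at u.\<close>
definition piK :: "real \<Rightarrow> real \<Rightarrow> (real^4 \<Rightarrow> complex) \<Rightarrow> (real \<Rightarrow> complex) \<Rightarrow> real \<Rightarrow> complex" where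
  "piK lam mu k h u =
     (\<integral>x. k x * exp (\<i> * complex_of_real
                (mu / (2 * lam) * x$2 - lam * x$4 + lam * x$3 * (u - x$1)
                 - lam / 2 * x$2 * (u - x$1)^2))
            * h (u - x$1) \<partial>lborel)"

definition pi_X3 :: "real \<Rightarrow> (real \<Rightarrow> complex) \<Rightarrow> real \<Rightarrow> complex" where
  "pi_X3 lam h = (\<lambda>v. - \<i> * complex_of_real lam * complex_of_real v * h v)"

end

theory Submission
  imports Defs "HOL-Probability.Characteristic_Functions" "HOL-Probability.Sinc_Integral"
begin

text \<open>Multiplying \<open>h\<close> by \<open>-i\<lambda>v\<close> replaces \<open>h(u - x\<^sub>1)\<close> by \<open>-i\<lambda>(u - x\<^sub>1)h(u - x\<^sub>1)\<close>, which splits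
  the integral into the two terms of the commutator with \<open>\<pi>(X\<^sub>3)\<close>. The phase is affine in \<open>\<mu>\<close>
  with slope \<open>x\<^sub>2/(2\<lambda>)\<close>, so differentiating under the integral sign (dominated convergence,
  the difference quotients of the phase factor being bounded by \<open>|x\<^sub>2|/(2|\<lambda>|)\<close>) produces
  the factor \<open>i x\<^sub>2/(2\<lambda>)\<close>. All integrals converge absolutely: \<open>\<kappa>\<close> decays faster than
  \<open>(1 + |x|)\<^sup>-\<^sup>8 \<le> \<Prod>\<^sub>b (1 + x\<^sub>b\<^sup>2)\<^sup>-\<^sup>1\<close>, and since \<open>|h| \<le> 1 + |h|\<^sup>2\<close> with \<open>h \<in> L\<^sup>2\<close>, the
  product weight times \<open>h(u - x\<^sub>1)\<close> is integrable coordinate by coordinate.\<close>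

lemma has_vector_derivative_iff_difference_quotient:
  fixes f :: "real \<Rightarrow> 'a::real_normed_vector"
  shows "(f has_vector_derivative D) (at x) \<longleftrightarrow> ((\<lambda>y. (f y - f x) /\<^sub>R (y - x)) \<longlongrightarrow> D) (at x)"
proof -
  have quotient: "norm (f y - f x - (y - x) *\<^sub>R D) / \<bar>y - x\<bar> = norm ((f y - f x) /\<^sub>R (y - x) - D)"
    if "y \<noteq> x" for y
  proof -
    have "(f y - f x) /\<^sub>R (y - x) - D = (f y - f x - (y - x) *\<^sub>R D) /\<^sub>R (y - x)"
      using that by (simp add: scaleR_diff_right)
    then show ?thesis by (simp add: divide_inverse_commute)
  qed
  have "(f has_vector_derivative D) (at x) \<longleftrightarrow>
        ((\<lambda>y. norm (f y - f x - (y - x) *\<^sub>R D) / norm (y - x)) \<longlongrightarrow> 0) (at x)"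
    unfolding has_vector_derivative_def has_derivative_iff_norm by (simp add: bounded_linear_scaleR_left)
  also have "\<dots> \<longleftrightarrow> ((\<lambda>y. norm ((f y - f x) /\<^sub>R (y - x) - D)) \<longlongrightarrow> 0) (at x)"
    by (intro filterlim_cong refl) (auto simp: eventually_at_filter quotient)
  also have "\<dots> \<longleftrightarrow> ((\<lambda>y. (f y - f x) /\<^sub>R (y - x)) \<longlongrightarrow> D) (at x)"
    by (simp add: tendsto_norm_zero_iff LIM_zero_iff)
  finally show ?thesis .
qed

lemma has_vector_derivative_integral:
  fixes f :: "real \<Rightarrow> 'a \<Rightarrow> 'b::{banach, second_countable_topology}"
  assumes integrable: "\<And>m. integrable M (f m)"
    and f'_measurable: "f' \<in> borel_measurable M"
    and deriv: "\<And>x. x \<in> space M \<Longrightarrow> ((\<lambda>m. f m x) has_vector_derivative f' x) (at mu)"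
    and g: "integrable M g"
    and lipschitz: "\<And>m x. x \<in> space M \<Longrightarrow> norm (f m x - f mu x) \<le> \<bar>m - mu\<bar> * g x"
  shows "((\<lambda>m. \<integral>x. f m x \<partial>M) has_vector_derivative (\<integral>x. f' x \<partial>M)) (at mu)"
proof -
  define q where "q m x = (f m x - f mu x) /\<^sub>R (m - mu)" for m x
  have quotient: "((\<integral>x. f m x \<partial>M) - (\<integral>x. f mu x \<partial>M)) /\<^sub>R (m - mu) = (\<integral>x. q m x \<partial>M)" for m
    unfolding q_def using integrable by simp
  have "((\<lambda>m. \<integral>x. q m x \<partial>M) \<longlongrightarrow> (\<integral>x. f' x \<partial>M)) (at mu)"
    unfolding tendsto_at_iff_sequentially o_def
  proof (intro allI impI)
    fix X :: "nat \<Rightarrow> real"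
    assume X: "\<forall>i. X i \<in> UNIV - {mu}" and X_lim: "X \<longlonglongrightarrow> mu"
    show "(\<lambda>i. \<integral>x. q (X i) x \<partial>M) \<longlonglongrightarrow> (\<integral>x. f' x \<partial>M)"
    proof (rule integral_dominated_convergence[OF f'_measurable _ g])
      show "q (X i) \<in> borel_measurable M" for i
        unfolding q_def using integrable by measurable
      show "AE x in M. (\<lambda>i. q (X i) x) \<longlonglongrightarrow> f' x"
      proof (rule AE_I2)
        fix x assume "x \<in> space M"
        then have "((\<lambda>m. q m x) \<longlongrightarrow> f' x) (at mu)"
          using deriv unfolding q_def has_vector_derivative_iff_difference_quotient by blast
        then show "(\<lambda>i. q (X i) x) \<longlonglongrightarrow> f' x"
          using X X_lim unfolding tendsto_at_iff_sequentially o_def by blast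
      qed
      show "AE x in M. norm (q (X i) x) \<le> g x" for i
      proof (rule AE_I2)
        fix x assume "x \<in> space M"
        have "norm (q (X i) x) = norm (f (X i) x - f mu x) / \<bar>X i - mu\<bar>"
          by (simp add: q_def divide_inverse_commute)
        also have "\<dots> \<le> g x"
          using lipschitz[OF \<open>x \<in> space M\<close>, of "X i"] X by (simp add: divide_le_eq mult.commute)
        finally show "norm (q (X i) x) \<le> g x" .
      qed
    qed
  qed
  then show ?thesis
    unfolding has_vector_derivative_iff_difference_quotient quotient .
qed

lemma integrable_lborel_prod_Basis:
  fixes f :: "'a::euclidean_space \<Rightarrow> real \<Rightarrow> real"
  assumes integrable: "\<And>b. b \<in> Basis \<Longrightarrow> integrable lborel (f b)"
    and nonneg: "\<And>b t. b \<in> Basis \<Longrightarrow> 0 \<le> f b t"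
  shows "integrable lborel (\<lambda>x::'a. \<Prod>b\<in>Basis. f b (x \<bullet> b))"
  unfolding integrable_iff_bounded
proof
  have [measurable]: "f b \<in> borel_measurable borel" if "b \<in> Basis" for b
    using integrable[OF that] by simp
  show "(\<lambda>x::'a. \<Prod>b\<in>Basis. f b (x \<bullet> b)) \<in> borel_measurable lborel"
    by measurable
  have "(\<integral>\<^sup>+x. ennreal (norm (\<Prod>b\<in>Basis. f b (x \<bullet> b))) \<partial>lborel)
      = (\<integral>\<^sup>+x. (\<Prod>b\<in>Basis. ennreal (f b (x \<bullet> b))) \<partial>lborel)"
    using nonneg by (intro nn_integral_cong) (simp add: prod_nonneg prod_ennreal)
  also have "\<dots> = (\<Prod>b\<in>Basis. \<integral>\<^sup>+t. ennreal (f b t) \<partial>lborel)"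
    using nonneg by (intro nn_integral_lborel_prod) simp_all
  also have "\<dots> < \<infinity>"
  proof -
    have "(\<integral>\<^sup>+t. ennreal (f b t) \<partial>lborel) \<noteq> top" if "b \<in> Basis" for b
      using integrable[OF that] nonneg[OF that] unfolding integrable_iff_bounded by (simp add: less_top)
    then have "(\<Prod>b\<in>Basis. \<integral>\<^sup>+t. ennreal (f b t) \<partial>lborel) \<noteq> top"
      by (simp only: ennreal_prod_eq_top) auto
    then show ?thesis by (simp add: less_top)
  qed
  finally show "(\<integral>\<^sup>+x. ennreal (norm (\<Prod>b\<in>Basis. f b (x \<bullet> b))) \<partial>lborel) < \<infinity>" .
qed

lemma prod_one_plus_square_le:
  fixes x :: "'a::euclidean_space"
  shows "(\<Prod>b\<in>Basis. 1 + (x \<bullet> b)^2) \<le> (1 + norm x) ^ (2 * DIM('a))"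
proof -
  have "(\<Prod>b\<in>Basis. 1 + (x \<bullet> b)^2) \<le> (\<Prod>b\<in>(Basis::'a set). (1 + norm x)^2)"
  proof (intro prod_mono conjI)
    fix b :: 'a assume "b \<in> Basis"
    then have "(x \<bullet> b)^2 \<le> (norm x)^2"
      by (metis Basis_le_norm abs_ge_zero power2_abs power_mono)
    also have "\<dots> \<le> (1 + norm x)^2 - 1"
      by (simp add: power2_eq_square algebra_simps)
    finally show "1 + (x \<bullet> b)^2 \<le> (1 + norm x)^2"
      by simp
  qed simp
  then show ?thesis by (simp add: power_mult)
qed

lemma integrable_decaying_mult_L2_translate:
  fixes g :: "'a::euclidean_space \<Rightarrow> complex" and h :: "real \<Rightarrow> complex"
  assumes g: "g \<in> borel_measurable lborel"
    and decay: "\<And>x. (1 + norm x) ^ (2 * DIM('a)) * norm (g x) \<le> C"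
    and h: "h \<in> borel_measurable lborel" and h_L2: "integrable lborel (\<lambda>t. (norm (h t))^2)"
    and b: "b \<in> Basis"
  shows "integrable lborel (\<lambda>x. g x * h (u - x \<bullet> b))"
proof -
  have [measurable]: "g \<in> borel_measurable borel" "h \<in> borel_measurable borel"
    using g h by simp_all
  define w where "w t = inverse (1 + t^2)" for t :: real
  have w_pos: "0 < w t" for t
    unfolding w_def by (simp add: add_pos_nonneg)
  define W where "W x = (\<Prod>b\<in>Basis. w (x \<bullet> b))" for x :: 'a
  have w_integrable: "integrable lborel w"
    using integrable_inverse_1_plus_square unfolding w_def
    by (simp add: set_integrable_def einterval_eq_UNIV)
  have W_integrable: "integrable lborel W"
    unfolding W_def using w_integrable w_pos by (intro integrable_lborel_prod_Basis) (simp_all add: less_imp_le)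
  have wh_integrable: "integrable lborel (\<lambda>t. w t * (norm (h (u - t)))^2)"
  proof (rule Bochner_Integration.integrable_bound)
    show "integrable lborel (\<lambda>t. (norm (h (u + (-1) * t)))^2)"
      using h_L2 by (intro lborel_integrable_real_affine) simp_all
    show "AE t in lborel. norm (w t * (norm (h (u - t)))^2) \<le> norm ((norm (h (u + (-1) * t)))^2)"
      using w_pos by (intro AE_I2) (simp add: w_def inverse_le_1_iff mult_left_le_one_le)
  qed (simp add: w_def)
  have Wh_integrable: "integrable lborel (\<lambda>x. W x * (norm (h (u - x \<bullet> b)))^2)"
  proof -
    have "integrable lborel (\<lambda>t. w t * (if b' = b then (norm (h (u - t)))^2 else 1))" for b'
      using wh_integrable w_integrable by (cases "b' = b") simp_all
    then have "integrable lborel (\<lambda>x::'a. \<Prod>b'\<in>Basis. w (x \<bullet> b') * (if b' = b then (norm (h (u - x \<bullet> b')))^2 else 1))"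
      using w_pos by (intro integrable_lborel_prod_Basis) (simp_all add: less_imp_le)
    moreover have "(\<Prod>b'\<in>Basis. w (x \<bullet> b') * (if b' = b then (norm (h (u - x \<bullet> b')))^2 else 1))
        = W x * (norm (h (u - x \<bullet> b)))^2" for x
      unfolding prod.distrib W_def using b by simp
    ultimately show ?thesis by simp
  qed
  show ?thesis
  proof (rule Bochner_Integration.integrable_bound)
    show "integrable lborel (\<lambda>x. C * (W x + W x * (norm (h (u - x \<bullet> b)))^2))"
      using W_integrable Wh_integrable by simp
    show "AE x in lborel. norm (g x * h (u - x \<bullet> b)) \<le> norm (C * (W x + W x * (norm (h (u - x \<bullet> b)))^2))"
    proof (rule AE_I2)
      fix x :: 'a
      have W_inverse: "W x = inverse (\<Prod>b\<in>Basis. 1 + (x \<bullet> b)^2)"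
        unfolding W_def w_def by (simp add: prod_inversef[symmetric])
      have "(\<Prod>b\<in>Basis. 1 + (x \<bullet> b)^2) * norm (g x) \<le> C"
        using prod_one_plus_square_le[of x] decay[of x] by (meson mult_right_mono norm_ge_zero order_trans)
      then have g_le: "norm (g x) \<le> C * W x"
        unfolding W_inverse by (simp add: field_simps prod_pos add_pos_nonneg)
      have "0 \<le> (norm (h (u - x \<bullet> b)) - 1/2)^2" by simp
      then have h_le: "norm (h (u - x \<bullet> b)) \<le> 1 + (norm (h (u - x \<bullet> b)))^2"
        by (simp add: power2_eq_square algebra_simps)
      have "norm (g x * h (u - x \<bullet> b)) \<le> C * W x * (1 + (norm (h (u - x \<bullet> b)))^2)"
        unfolding norm_mult using g_le h_le by (rule mult_mono) (auto intro: order_trans[OF norm_ge_zero g_le])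
      also have "\<dots> \<le> norm (C * (W x + W x * (norm (h (u - x \<bullet> b)))^2))"
        by (simp add: algebra_simps)
      finally show "norm (g x * h (u - x \<bullet> b)) \<le> norm (C * (W x + W x * (norm (h (u - x \<bullet> b)))^2))" .
    qed
  qed simp
qed

lemma norm_iexp_diff_le: "norm (iexp s - iexp t) \<le> \<bar>s - t\<bar>"
proof -
  have "iexp s - iexp t = iexp t * (iexp (s - t) - 1)"
    by (simp add: exp_add[symmetric] algebra_simps)
  then show ?thesis
    using iexp_approx1[of "s - t" 0] by (simp add: norm_mult)
qed

lemma iexp_affine_has_vector_derivative:
  "((\<lambda>m. iexp (c + (m - mu) * a)) has_vector_derivative \<i> * of_real a * iexp c) (at mu)"
proof -
  have "((\<lambda>z. exp (\<i> * (of_real c + (z - of_real mu) * of_real a)))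
          has_field_derivative exp (\<i> * of_real c) * (\<i> * of_real a)) (at (of_real mu))"
    by (auto intro!: derivative_eq_intros)
  from has_vector_derivative_real_field[OF this] show ?thesis
    by (simp add: ac_simps)
qed

lemma schwartz_borel_measurable:
  assumes "schwartz f"
  shows "f \<in> borel_measurable borel"
proof (rule borel_measurable_continuous_onI)
  show "continuous_on UNIV f"
    using assms unfolding schwartz_def
    by (metis iter_partial.simps(1) differentiable_imp_continuous_within continuous_at_imp_continuous_on)
qed

lemma schwartz_decay:
  assumes "schwartz f"
  obtains C where "\<And>x. (1 + norm x) ^ n * norm (f x) \<le> C"
  using assms unfolding schwartz_def by (metis iter_partial.simps(1))

lemma decay_mult_component:
  fixes f :: "real^'n \<Rightarrow> complex"
  assumes "\<And>x. (1 + norm x) ^ Suc n * norm (f x) \<le> C"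
  shows "(1 + norm x) ^ n * norm (of_real (x$j) * f x) \<le> C"
proof -
  have "(1 + norm x) ^ n * norm (of_real (x$j) * f x) = (1 + norm x) ^ n * \<bar>x$j\<bar> * norm (f x)"
    by (simp add: norm_mult)
  also have "\<dots> \<le> (1 + norm x) ^ n * (1 + norm x) * norm (f x)"
    using component_le_norm_cart[of x j] by (intro mult_right_mono mult_left_mono) auto
  also have "\<dots> \<le> C"
    using assms[of x] by (simp add: mult.commute)
  finally show ?thesis .
qed

definition engel_phase :: "real \<Rightarrow> real \<Rightarrow> real \<Rightarrow> real^4 \<Rightarrow> real" where
  "engel_phase lam mu u x =
     mu / (2 * lam) * x$2 - lam * x$4 + lam * x$3 * (u - x$1) - lam / 2 * x$2 * (u - x$1)^2"

lemma piK_eq_integral: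
  "piK lam mu k h u = (\<integral>x. k x * iexp (engel_phase lam mu u x) * h (u - x$1) \<partial>lborel)"
  unfolding piK_def engel_phase_def ..

lemma engel_phase_affine:
  "engel_phase lam m u x = engel_phase lam mu u x + (m - mu) * (x$2 / (2 * lam))"
  unfolding engel_phase_def by (simp add: algebra_simps diff_divide_distrib)

lemma integrable_piK_integrand:
  assumes "g \<in> borel_measurable borel" and "\<And>x. (1 + norm x) ^ 8 * norm (g x) \<le> C"
    and "h \<in> borel_measurable lborel" and "integrable lborel (\<lambda>v. (norm (h v))^2)"
  shows "integrable lborel (\<lambda>x. g x * iexp (engel_phase lam mu u x) * h (u - x$1))"
proof -
  have "integrable lborel (\<lambda>x. (g x * iexp (engel_phase lam mu u x)) * h (u - x \<bullet> axis 1 1))"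
  proof (rule integrable_decaying_mult_L2_translate[where C = C])
    show "(\<lambda>x. g x * iexp (engel_phase lam mu u x)) \<in> borel_measurable lborel"
      using assms(1) unfolding engel_phase_def by measurable
    show "(1 + norm x) ^ (2 * DIM(real^4)) * norm (g x * iexp (engel_phase lam mu u x)) \<le> C" for x
      using assms(2)[of x] by (simp add: norm_mult)
  qed (use assms in simp_all)
  then show ?thesis by (simp add: cart_eq_inner_axis)
qed

lemma schwartz_integrable_piK_integrand:
  assumes "schwartz k"
    and "h \<in> borel_measurable lborel" and "integrable lborel (\<lambda>v. (norm (h v))^2)"
  shows "integrable lborel (\<lambda>x. k x * iexp (engel_phase lam mu u x) * h (u - x$1))"
    and "integrable lborel (\<lambda>x. of_real (x$j) * k x * iexp (engel_phase lam mu u x) * h (u - x$1))"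
proof -
  note [measurable] = schwartz_borel_measurable[OF assms(1)]
  obtain C where C: "\<And>x. (1 + norm x) ^ Suc 8 * norm (k x) \<le> C"
    using schwartz_decay[OF assms(1)] by blast
  obtain C' where "\<And>x. (1 + norm x) ^ 8 * norm (k x) \<le> C'"
    using schwartz_decay[OF assms(1)] by blast
  then show "integrable lborel (\<lambda>x. k x * iexp (engel_phase lam mu u x) * h (u - x$1))"
    using assms(2,3) by (intro integrable_piK_integrand) simp_all
  show "integrable lborel (\<lambda>x. of_real (x$j) * k x * iexp (engel_phase lam mu u x) * h (u - x$1))"
    using assms(2,3) decay_mult_component[OF C] by (intro integrable_piK_integrand) simp_all
qed

lemma piK_mult_first_coordinate:
  assumes "lam \<noteq> 0" and "schwartz k"
    and "h \<in> borel_measurable lborel" and "integrable lborel (\<lambda>v. (norm (h v))^2)"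
  shows "piK lam mu (\<lambda>x. of_real (x$1) * k x) h u
    = (\<i> / of_real lam) * (pi_X3 lam (piK lam mu k h) u - piK lam mu k (pi_X3 lam h) u)"
proof -
  define F where "F x = k x * iexp (engel_phase lam mu u x) * h (u - x$1)" for x
  have "piK lam mu k (pi_X3 lam h) u
      = (\<integral>x. (- \<i> * of_real lam * of_real u) * F x + (\<i> * of_real lam) * (of_real (x$1) * F x) \<partial>lborel)"
    unfolding piK_eq_integral pi_X3_def F_def
    by (intro Bochner_Integration.integral_cong refl) (simp add: algebra_simps)
  also have "\<dots> = (- \<i> * of_real lam * of_real u) * piK lam mu k h u
      + (\<i> * of_real lam) * piK lam mu (\<lambda>x. of_real (x$1) * k x) h u"
    using schwartz_integrable_piK_integrand(1)[OF assms(2-4)]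
      schwartz_integrable_piK_integrand(2)[OF assms(2-4), where j = 1]
    unfolding piK_eq_integral F_def by (simp add: mult.assoc)
  finally have X3_right: "piK lam mu k (pi_X3 lam h) u = \<dots>" .
  show ?thesis
    unfolding X3_right using assms(1) by (simp add: pi_X3_def field_simps)
qed

lemma piK_has_vector_derivative_mu:
  assumes "lam \<noteq> 0" and "schwartz k"
    and "h \<in> borel_measurable lborel" and "integrable lborel (\<lambda>v. (norm (h v))^2)"
  shows "((\<lambda>m. piK lam m k h u) has_vector_derivative
           \<i> / (2 * of_real lam) * piK lam mu (\<lambda>x. of_real (x$2) * k x) h u) (at mu)"
proof -
  note [measurable] = schwartz_borel_measurable[OF assms(2)] assms(3)[simplified]
  define a where "a x = x$2 / (2 * lam)" for x :: "real^4"
  define E where "E m x = iexp (engel_phase lam m u x)" for m x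
  have E_affine: "E m x = iexp (engel_phase lam mu u x + (m - mu) * a x)" for m x
    unfolding E_def a_def by (subst engel_phase_affine[of _ m _ _ mu]) (rule refl)
  have E_deriv: "((\<lambda>m. E m x) has_vector_derivative \<i> * of_real (a x) * E mu x) (at mu)" for x
    using iexp_affine_has_vector_derivative[of "engel_phase lam mu u x" mu "a x"] by (simp add: E_affine)
  have E_lipschitz: "norm (E m x - E mu x) \<le> \<bar>m - mu\<bar> * \<bar>a x\<bar>" for m x
    using norm_iexp_diff_le[of "engel_phase lam mu u x + (m - mu) * a x" "engel_phase lam mu u x"]
    by (simp add: E_affine abs_mult)
  define g where "g x = norm (of_real (x$2) * k x * E mu x * h (u - x$1)) / (2 * \<bar>lam\<bar>)" for x
  have "((\<lambda>m. \<integral>x. k x * E m x * h (u - x$1) \<partial>lborel) has_vector_derivative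
          (\<integral>x. k x * (\<i> * of_real (a x) * E mu x) * h (u - x$1) \<partial>lborel)) (at mu)"
  proof (rule has_vector_derivative_integral[where g = g])
    show "integrable lborel (\<lambda>x. k x * E m x * h (u - x$1))" for m
      unfolding E_def by (rule schwartz_integrable_piK_integrand(1)[OF assms(2-4)])
    show "integrable lborel g"
      unfolding g_def E_def
      using schwartz_integrable_piK_integrand(2)[OF assms(2-4), where j = 2] by simp
    show "(\<lambda>x. k x * (\<i> * of_real (a x) * E mu x) * h (u - x$1)) \<in> borel_measurable lborel"
      unfolding a_def E_def engel_phase_def by measurable
    show "((\<lambda>m. k x * E m x * h (u - x$1)) has_vector_derivative
            k x * (\<i> * of_real (a x) * E mu x) * h (u - x$1)) (at mu)" for x
      by (intro has_vector_derivative_mult_left has_vector_derivative_mult_right E_deriv)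
    show "norm (k x * E m x * h (u - x$1) - k x * E mu x * h (u - x$1)) \<le> \<bar>m - mu\<bar> * g x" for m x
    proof -
      have "k x * E m x * h (u - x$1) - k x * E mu x * h (u - x$1) = k x * h (u - x$1) * (E m x - E mu x)"
        by (simp add: algebra_simps)
      then have "norm (k x * E m x * h (u - x$1) - k x * E mu x * h (u - x$1))
          = norm (k x) * norm (h (u - x$1)) * norm (E m x - E mu x)"
        by (simp add: norm_mult)
      also have "\<dots> \<le> norm (k x) * norm (h (u - x$1)) * (\<bar>m - mu\<bar> * \<bar>a x\<bar>)"
        by (intro mult_left_mono E_lipschitz) simp
      also have "\<dots> = \<bar>m - mu\<bar> * g x"
        unfolding g_def a_def E_def by (simp add: norm_mult abs_mult)
      finally show ?thesis .
    qed
  qed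
  moreover have "(\<integral>x. k x * (\<i> * of_real (a x) * E mu x) * h (u - x$1) \<partial>lborel)
      = (\<integral>x. \<i> / (2 * of_real lam) * (of_real (x$2) * k x * E mu x * h (u - x$1)) \<partial>lborel)"
    unfolding a_def by (intro Bochner_Integration.integral_cong refl) simp
  ultimately show ?thesis
    unfolding piK_eq_integral E_def by simp
qed

theorem mainTheorem2:
  fixes lam mu u :: real and k :: "real^4 \<Rightarrow> complex" and h :: "real \<Rightarrow> complex"
  assumes "lam \<noteq> 0" and "schwartz k"
    and "h \<in> borel_measurable lborel" and "integrable lborel (\<lambda>v. (norm (h v))^2)"
  shows "(piK lam mu (\<lambda>x. complex_of_real (x$1) * k x) h u
           = (\<i> / complex_of_real lam) * (pi_X3 lam (piK lam mu k h) u - piK lam mu k (pi_X3 lam h) u))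
     \<and> (\<exists>D. ((\<lambda>m. piK lam m k h u) has_vector_derivative D) (at mu) \<and>
           piK lam mu (\<lambda>x. complex_of_real (x$2) * k x) h u = (2 * complex_of_real lam / \<i>) * D)"
proof
  show "piK lam mu (\<lambda>x. complex_of_real (x$1) * k x) h u
      = (\<i> / complex_of_real lam) * (pi_X3 lam (piK lam mu k h) u - piK lam mu k (pi_X3 lam h) u)"
    using piK_mult_first_coordinate[OF assms] .
  let ?D = "\<i> / (2 * of_real lam) * piK lam mu (\<lambda>x. of_real (x$2) * k x) h u"
  have "((\<lambda>m. piK lam m k h u) has_vector_derivative ?D) (at mu)"
    using piK_has_vector_derivative_mu[OF assms] .
  moreover have "piK lam mu (\<lambda>x. complex_of_real (x$2) * k x) h u = (2 * complex_of_real lam / \<i>) * ?D"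
    using assms(1) by simp
  ultimately show "\<exists>D. ((\<lambda>m. piK lam m k h u) has_vector_derivative D) (at mu) \<and>
      piK lam mu (\<lambda>x. complex_of_real (x$2) * k x) h u = (2 * complex_of_real lam / \<i>) * D"
    by blast
qed

end
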